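(* There is a function $C_3(t,\epsilon)$ such that the following holds for every positive integer $t$ and every $\epsilon\in(0,1)$: let $G$ be a bipartite graph with $\delta(G)\geq C_3(t,\epsilon)$ which is induced $S_{t,t}$-free. Then for every path $x_1x_2x_3x_4$ of length $3$ in $G$ we have $|S_{N(x_1)}^{N(x_4)}(\epsilon)|\leq C_3(t,\epsilon)$.
   Context: For positive integers $a,b$, the biclaw $S_{a,b}$ is the graph with vertex set $\{x,x_1,\dots,x_a,y,y_1,\dots,y_b\}$ and edges $xy$, $xy_1,\dots,xy_b$, $yx_1,\dots,yx_a$. Induced $S_{t,t}$-free means no induced subgraph isomorphic to $S_{t,t}$. $N(v)$ is the neighbourhood of $v$, $\delta(G)$ the minimum degree. For vertex sets $X,Y$ and $\epsilon\in(0,1)$, $S_X^Y(\epsilon)=\{x\in X : |N(x)\cap Y|\leq (1-\epsilon)|Y|\}$. *)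

theory Defs
  imports Complex_Main
begin

definition graph :: "nat set \<Rightarrow> (nat \<Rightarrow> nat \<Rightarrow> bool) \<Rightarrow> bool" where
  "graph V E \<longleftrightarrow> finite V \<and> (\<forall>u v. E u v \<longrightarrow> u \<in> V \<and> v \<in> V)
     \<and> (\<forall>u v. E u v \<longrightarrow> E v u) \<and> (\<forall>u. \<not> E u u)"

definition nbhd :: "nat set \<Rightarrow> (nat \<Rightarrow> nat \<Rightarrow> bool) \<Rightarrow> nat \<Rightarrow> nat set" where
  "nbhd V E v = {u \<in> V. E v u}"

definition bipartite :: "nat set \<Rightarrow> (nat \<Rightarrow> nat \<Rightarrow> bool) \<Rightarrow> bool" where
  "bipartite V E \<longleftrightarrow> (\<exists>A B. A \<union> B = V \<and> A \<inter> B = {} \<and>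
     (\<forall>u v. E u v \<longrightarrow> (u \<in> A \<longleftrightarrow> v \<in> B)))"

definition min_degree_ge :: "nat set \<Rightarrow> (nat \<Rightarrow> nat \<Rightarrow> bool) \<Rightarrow> real \<Rightarrow> bool" where
  "min_degree_ge V E d \<longleftrightarrow> (\<forall>v \<in> V. real (card (nbhd V E v)) \<ge> d)"

datatype bvert = BX | BY | BXi nat | BYi nat

definition biclaw_verts :: "nat \<Rightarrow> nat \<Rightarrow> bvert set" where
  "biclaw_verts a b = {BX, BY} \<union> BXi ` {1..a} \<union> BYi ` {1..b}"

fun biclaw_edge :: "bvert \<Rightarrow> bvert \<Rightarrow> bool" where
  "biclaw_edge BX BY = True"
| "biclaw_edge BY BX = True"
| "biclaw_edge BX (BYi _) = True"
| "biclaw_edge (BYi _) BX = True"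
| "biclaw_edge BY (BXi _) = True"
| "biclaw_edge (BXi _) BY = True"
| "biclaw_edge _ _ = False"

definition has_induced_biclaw :: "nat set \<Rightarrow> (nat \<Rightarrow> nat \<Rightarrow> bool) \<Rightarrow> nat \<Rightarrow> nat \<Rightarrow> bool" where
  "has_induced_biclaw V E a b \<longleftrightarrow> (\<exists>f. inj_on f (biclaw_verts a b) \<and> f ` biclaw_verts a b \<subseteq> V \<and>
     (\<forall>u \<in> biclaw_verts a b. \<forall>v \<in> biclaw_verts a b. E (f u) (f v) \<longleftrightarrow> biclaw_edge u v))"

definition S_set :: "nat set \<Rightarrow> (nat \<Rightarrow> nat \<Rightarrow> bool) \<Rightarrow> nat set \<Rightarrow> nat set \<Rightarrow> real \<Rightarrow> nat set" where
  "S_set V E X Y eps = {x \<in> X. real (card (nbhd V E x \<inter> Y)) \<le> (1 - eps) * real (card Y)}"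

end

theory Submission
  imports Defs
begin

(* In a bipartite graph without induced S_{t,t}, an edge ab admits fewer than t (2/\<delta>)^t vertices of
   N(a) that miss a \<delta>-fraction of N(b): otherwise a greedy averaging argument finds t of them and
   t vertices of N(b) with no edges in between, and together with a and b these span an induced
   S_{t,t}.  For the path x1 x2 x3 x4 this yields y in N(x3) missing few vertices of N(x2) and of
   N(x4).  The vertices of N(x1) that miss an eps-fraction of N(x4) but few of N(x2) then miss an
   eps/2-fraction of Y = N(y) \<inter> N(x4); if there were many, the greedy argument would give t of them,
   Ts, and t vertices Tm of Y with no edges in between.  Since y and Ts all miss few vertices of
   N(x2), they have a common neighbour w there, and the edge w y with Ts \<subseteq> N(w), Tm \<subseteq> N(y)
   spans an induced S_{t,t} again. *)

definition non_nbhd :: "('a \<Rightarrow> 'a \<Rightarrow> bool) \<Rightarrow> 'a \<Rightarrow> 'a set \<Rightarrow> 'a set" where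
  "non_nbhd E u Y = {m \<in> Y. \<not> E u m}"

lemma finite_non_nbhd [simp]: "finite Y \<Longrightarrow> finite (non_nbhd E u Y)"
  by (simp add: non_nbhd_def)

lemma sum_card_non_nbhd_swap:
  assumes "finite X" "finite Y"
  shows "(\<Sum>m\<in>Y. card {u \<in> X. \<not> E u m}) = (\<Sum>u\<in>X. card (non_nbhd E u Y))"
proof -
  have card_filter: "card {x \<in> A. P x} = (\<Sum>x\<in>A. if P x then 1 else 0)"
    if "finite A" for A :: "'a set" and P
    using that by (simp add: sum.If_cases Int_def)
  have "(\<Sum>m\<in>Y. card {u \<in> X. \<not> E u m}) = (\<Sum>m\<in>Y. \<Sum>u\<in>X. if \<not> E u m then 1 else 0)"
    using assms(1) by (simp add: card_filter)
  also have "\<dots> = (\<Sum>u\<in>X. \<Sum>m\<in>Y. if \<not> E u m then 1 else 0)"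
    by (rule sum.swap)
  also have "\<dots> = (\<Sum>u\<in>X. card (non_nbhd E u Y))"
    using assms(2) by (simp add: card_filter non_nbhd_def)
  finally show ?thesis .
qed

lemma exists_vertex_missed_by_many:
  fixes d :: real
  assumes "finite X" "finite Y" "Y \<noteq> {}" "\<forall>u\<in>X. d \<le> card (non_nbhd E u Y)"
  shows "\<exists>m\<in>Y. card X * d \<le> real (card Y) * card {u \<in> X. \<not> E u m}"
proof -
  let ?f = "\<lambda>m. card {u \<in> X. \<not> E u m}"
  have "Max (?f ` Y) \<in> ?f ` Y"
    using assms(2,3) by simp
  then obtain m where m: "Max (?f ` Y) = ?f m" "m \<in> Y"
    by (rule imageE)
  have "card X * d \<le> (\<Sum>u\<in>X. real (card (non_nbhd E u Y)))"
    using sum_mono[of X "\<lambda>_. d"] assms(4) by (simp add: mult.commute)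
  also have "\<dots> = (\<Sum>m\<in>Y. real (?f m))"
    by (simp only: of_nat_sum[symmetric] sum_card_non_nbhd_swap[OF assms(1,2)])
  also have "\<dots> \<le> card Y * real (?f m)"
    using sum_le_card_Max[OF assms(2), of ?f] m(1) by (simp flip: of_nat_sum of_nat_mult)
  finally show ?thesis using m(2) by blast
qed

lemma exists_vertex_extending_anticomplete:
  fixes c :: real
  assumes X: "finite X" and Y: "finite Y" and Tm: "Tm \<subseteq> Y" "card Tm = k" and c: "0 \<le> c" "c \<le> 1"
    and misses: "\<forall>u\<in>X. c * card Y \<le> card (non_nbhd E u Y)" and k: "2 * real (Suc k) \<le> c * card Y"
  shows "\<exists>m\<in>Y - Tm. c / 2 * card X \<le> card {u \<in> X. \<not> E u m}"
proof -
  define Y' where "Y' = Y - Tm"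
  have fin: "finite Y'" "finite Tm"
    using Y Tm(1) finite_subset unfolding Y'_def by auto
  have card_Y': "card Y' = card Y - k"
    using Tm fin(2) by (simp add: Y'_def card_Diff_subset)
  have "real k < card Y"
    using k c mult_left_le_one_le[of "card Y" c] by simp
  then have "Y' \<noteq> {}"
    using card_Y' by auto
  \<comment> \<open>Since k is at most half of c |Y|, every u in X still misses c |Y| / 2 vertices of Y - Tm.\<close>
  have "c * card Y / 2 \<le> card (non_nbhd E u Y')" if "u \<in> X" for u
  proof -
    have "card (non_nbhd E u Y) \<le> card (non_nbhd E u Y' \<union> Tm)"
      using fin by (intro card_mono) (auto simp: non_nbhd_def Y'_def)
    also have "\<dots> \<le> card (non_nbhd E u Y') + k"
      using card_Un_le Tm(2) by metis
    finally show ?thesis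
      using misses that k by fastforce
  qed
  then obtain m where m: "m \<in> Y'"
    and many: "card X * (c * card Y / 2) \<le> real (card Y') * card {u \<in> X. \<not> E u m}"
    using exists_vertex_missed_by_many[OF X fin(1) \<open>Y' \<noteq> {}\<close>] by blast
  have "card Y' * (c / 2 * card X) \<le> card Y * (c / 2 * card X)"
    using card_Y' c(1) by (intro mult_right_mono) auto
  also have "\<dots> \<le> real (card Y') * card {u \<in> X. \<not> E u m}"
    using many by (simp add: algebra_simps)
  finally have "c / 2 * card X \<le> card {u \<in> X. \<not> E u m}"
    using \<open>Y' \<noteq> {}\<close> fin(1) by (simp add: card_gt_0_iff)
  with m show ?thesis
    unfolding Y'_def by blast
qed

lemma exists_anticomplete_subsets_greedy:
  fixes c :: real
  assumes X: "finite X" and Y: "finite Y" and c: "0 \<le> c" "c \<le> 1"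
    and misses: "\<forall>u\<in>X. c * card Y \<le> card (non_nbhd E u Y)" and k: "2 * real k \<le> c * card Y"
  shows "\<exists>Tm X'. Tm \<subseteq> Y \<and> card Tm = k \<and> X' \<subseteq> X \<and> (c / 2)^k * card X \<le> card X'
    \<and> (\<forall>u\<in>X'. \<forall>m\<in>Tm. \<not> E u m)"
  using k
proof (induction k)
  case 0
  show ?case by (rule exI[of _ "{}"], rule exI[of _ X]) simp
next
  case (Suc k)
  then obtain Tm X' where Tm: "Tm \<subseteq> Y" "card Tm = k" and X': "X' \<subseteq> X"
    "(c / 2)^k * card X \<le> card X'" and anti: "\<forall>u\<in>X'. \<forall>m\<in>Tm. \<not> E u m" by auto
  have "finite X'" "\<forall>u\<in>X'. c * card Y \<le> card (non_nbhd E u Y)"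
    using X X'(1) misses finite_subset by auto
  then obtain m where m: "m \<in> Y - Tm" and many: "c / 2 * card X' \<le> card {u \<in> X'. \<not> E u m}"
    using exists_vertex_extending_anticomplete[OF _ Y Tm c _ Suc.prems] by blast
  have "(c / 2)^Suc k * card X \<le> (c / 2) * card X'"
    using X'(2) c by (simp add: mult_left_mono mult.assoc)
  with many have "(c / 2)^Suc k * card X \<le> card {u \<in> X'. \<not> E u m}"
    by linarith
  then show ?case
  proof (intro exI conjI)
    show "insert m Tm \<subseteq> Y" "card (insert m Tm) = Suc k"
      using m Tm finite_subset[OF Tm(1) Y] by auto
    show "{u \<in> X'. \<not> E u m} \<subseteq> X"
      using X'(1) by auto
    show "\<forall>u\<in>{u \<in> X'. \<not> E u m}. \<forall>m'\<in>insert m Tm. \<not> E u m'"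
      using anti by auto
  qed
qed

lemma exists_anticomplete_subsets:
  fixes c :: real
  assumes X: "finite X" and Y: "finite Y" and c: "0 < c" "c \<le> 1"
    and misses: "\<forall>u\<in>X. c * card Y \<le> card (non_nbhd E u Y)"
    and "2 * real t \<le> c * card Y" and "real t * (2 / c) ^ t \<le> card X"
  shows "\<exists>Ts\<subseteq>X. \<exists>Tm\<subseteq>Y. card Ts = t \<and> card Tm = t \<and> (\<forall>u\<in>Ts. \<forall>m\<in>Tm. \<not> E u m)"
proof -
  obtain Tm X' where Tm: "Tm \<subseteq> Y" "card Tm = t" and X': "X' \<subseteq> X"
    "(c / 2)^t * card X \<le> card X'" and anti: "\<forall>u\<in>X'. \<forall>m\<in>Tm. \<not> E u m"
    using exists_anticomplete_subsets_greedy[OF X Y less_imp_le[OF c(1)] c(2) misses assms(6)]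
    by blast
  have "real t = (c / 2)^t * (t * (2 / c)^t)"
    using c(1) by (simp add: power_mult_distrib[symmetric])
  also have "\<dots> \<le> (c / 2)^t * card X"
    using assms(7) c(1) by (intro mult_left_mono) auto
  also have "\<dots> \<le> card X'"
    by (rule X'(2))
  finally have "t \<le> card X'"
    by simp
  then obtain Ts where Ts: "Ts \<subseteq> X'" "card Ts = t"
    by (rule obtain_subset_with_card_n)
  show ?thesis
    using Ts Tm X'(1) anti by (intro exI[of _ Ts] conjI exI[of _ Tm]) auto
qed

lemma exists_common_neighbour:
  fixes \<delta> :: real
  assumes "finite W" "W \<noteq> {}" "finite Z"
    and misses: "\<forall>u\<in>W. card (non_nbhd E u Z) < \<delta> * card Z" and "card W * \<delta> \<le> 1"
  shows "\<exists>w\<in>Z. \<forall>u\<in>W. E u w"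
proof -
  have "real (card (\<Union>u\<in>W. non_nbhd E u Z)) \<le> (\<Sum>u\<in>W. real (card (non_nbhd E u Z)))"
    unfolding of_nat_sum[symmetric] of_nat_le_iff by (rule card_UN_le[OF assms(1)])
  also have "\<dots> < card W * (\<delta> * card Z)"
    using sum_bounded_above_strict[of W "\<lambda>u. real (card (non_nbhd E u Z))"] misses assms(1,2)
    by (simp add: card_gt_0_iff)
  also have "\<dots> \<le> card Z"
    using mult_right_mono[OF assms(5), of "real (card Z)"] by (simp add: mult.assoc)
  finally have small: "card (\<Union>u\<in>W. non_nbhd E u Z) < card Z"
    by simp
  have "\<not> Z \<subseteq> (\<Union>u\<in>W. non_nbhd E u Z)"
  proof
    assume "Z \<subseteq> (\<Union>u\<in>W. non_nbhd E u Z)"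
    then have "card Z \<le> card (\<Union>u\<in>W. non_nbhd E u Z)"
      using assms(1,3) by (intro card_mono) simp_all
    with small show False
      by simp
  qed
  then show ?thesis
    by (auto simp: non_nbhd_def)
qed

lemma card_non_nbhd_le_restrict:
  assumes "finite Z"
  shows "card (non_nbhd E u Z) \<le> card (non_nbhd E u {m \<in> Z. E y m}) + card (non_nbhd E y Z)"
proof -
  have "card (non_nbhd E u Z) \<le> card (non_nbhd E u {m \<in> Z. E y m} \<union> non_nbhd E y Z)"
    using assms by (intro card_mono) (auto simp: non_nbhd_def)
  also have "\<dots> \<le> card (non_nbhd E u {m \<in> Z. E y m}) + card (non_nbhd E y Z)"
    by (rule card_Un_le)
  finally show ?thesis .
qed

lemma card_filter_add_card_non_nbhd:
  assumes "finite Z"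
  shows "card {m \<in> Z. E y m} + card (non_nbhd E y Z) = card Z"
proof -
  have "card ({m \<in> Z. E y m} \<union> non_nbhd E y Z) = card {m \<in> Z. E y m} + card (non_nbhd E y Z)"
    using assms by (intro card_Un_disjoint) (auto simp: non_nbhd_def)
  moreover have "{m \<in> Z. E y m} \<union> non_nbhd E y Z = Z"
    by (auto simp: non_nbhd_def)
  ultimately show ?thesis
    by simp
qed

lemma card_non_nbhd_in_common_nbhd:
  fixes \<delta> eps :: real
  assumes Z: "finite Z" and y: "card (non_nbhd E y Z) < \<delta> * card Z" and "\<delta> \<le> eps / 2"
    and u: "eps * card Z \<le> card (non_nbhd E u Z)"
  shows "eps / 2 * card {m \<in> Z. E y m} \<le> card (non_nbhd E u {m \<in> Z. E y m})"
proof -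
  have "0 < \<delta> * card Z"
    using y by (metis of_nat_0_le_iff order_le_less_trans)
  then have "0 < eps"
    using assms(3) by (simp add: zero_less_mult_iff)
  have "card {m \<in> Z. E y m} \<le> card Z"
    using card_filter_add_card_non_nbhd[OF Z] by (metis le_add1)
  then have "eps / 2 * card {m \<in> Z. E y m} \<le> eps / 2 * card Z"
    using \<open>0 < eps\<close> by (intro mult_left_mono) simp_all
  also have "\<dots> \<le> eps * card Z - \<delta> * card Z"
    using mult_right_mono[OF assms(3), of "real (card Z)"] by simp
  also have "\<dots> \<le> card (non_nbhd E u {m \<in> Z. E y m})"
    using card_non_nbhd_le_restrict[OF Z, of E u y] u y by linarith
  finally show ?thesis .
qed

lemma exists_anticomplete_subsets_in_nbhd:
  fixes \<delta> eps :: real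
  assumes X: "finite X" and Z: "finite Z" and eps: "eps \<le> 1" and \<delta>: "\<delta> \<le> eps / 2"
    and y: "card (non_nbhd E y Z) < \<delta> * card Z"
    and misses: "\<forall>u\<in>X. eps * card Z \<le> card (non_nbhd E u Z)"
    and deg: "8 * real t \<le> eps * card Z" and large: "real t * (4 / eps) ^ t \<le> card X"
  shows "\<exists>Ts\<subseteq>X. \<exists>Tm\<subseteq>{m \<in> Z. E y m}. card Ts = t \<and> card Tm = t \<and> (\<forall>u\<in>Ts. \<forall>m\<in>Tm. \<not> E u m)"
proof -
  let ?Y = "{m \<in> Z. E y m}"
  have "0 < \<delta> * card Z"
    using y by (metis of_nat_0_le_iff order_le_less_trans)
  then have "0 < \<delta>"
    by (simp add: zero_less_mult_iff)
  then have "0 < eps" "0 < eps / 2" "eps / 2 \<le> 1"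
    using \<delta> eps by linarith+
  have "real (card Z) \<le> 2 * card ?Y"
    using card_filter_add_card_non_nbhd[OF Z, of E y] y \<delta> eps
      mult_right_mono[of \<delta> "1/2" "real (card Z)"]
    by linarith
  then have "eps * card Z \<le> eps * (2 * card ?Y)"
    using \<open>0 < eps\<close> by (intro mult_left_mono) auto
  then have Y_large: "2 * real t \<le> eps / 2 * card ?Y"
    using deg by linarith
  have Y_misses: "\<forall>u\<in>X. eps / 2 * card ?Y \<le> card (non_nbhd E u ?Y)"
    using card_non_nbhd_in_common_nbhd[OF Z y \<delta>] misses by blast
  have X_large: "real t * (2 / (eps / 2)) ^ t \<le> card X"
    using large by simp
  have "finite ?Y"
    using Z by simp
  from exists_anticomplete_subsets[OF X this \<open>0 < eps / 2\<close> \<open>eps / 2 \<le> 1\<close> Y_misses Y_large X_large]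
  show ?thesis .
qed

lemma graphD:
  assumes "graph V E"
  shows "finite V" "E u v \<Longrightarrow> u \<in> V" "E u v \<Longrightarrow> v \<in> V" "E u v \<Longrightarrow> E v u" "\<not> E u u"
  using assms unfolding graph_def by blast+

lemma finite_nbhd: "graph V E \<Longrightarrow> finite (nbhd V E v)"
  by (simp add: nbhd_def graphD(1))

lemma bipartite_side:
  assumes "graph V E" "bipartite V E"
  obtains A where "\<And>u v. E u v \<Longrightarrow> u \<in> A \<longleftrightarrow> v \<notin> A"
proof -
  obtain A B where "A \<union> B = V" "A \<inter> B = {}" "\<forall>u v. E u v \<longrightarrow> (u \<in> A \<longleftrightarrow> v \<in> B)"
    using assms(2) unfolding bipartite_def by blast
  then have "E u v \<Longrightarrow> u \<in> A \<longleftrightarrow> v \<notin> A" for u v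
    using graphD(3)[OF assms(1)] by blast
  then show ?thesis using that by blast
qed

lemma nbhd_independent:
  assumes "graph V E" "bipartite V E" "u \<in> nbhd V E w" "v \<in> nbhd V E w"
  shows "\<not> E u v"
proof -
  obtain A where side: "\<And>u v. E u v \<Longrightarrow> u \<in> A \<longleftrightarrow> v \<notin> A"
    using bipartite_side[OF assms(1,2)] by blast
  have "E w u" "E w v"
    using assms(3,4) by (auto simp: nbhd_def)
  then show ?thesis
    using side by blast
qed

lemma S_set_eq_non_nbhd:
  assumes "graph V E" "finite Y"
  shows "S_set V E X Y eps = {x \<in> X. eps * card Y \<le> card (non_nbhd E x Y)}"
proof -
  have "real (card (nbhd V E x \<inter> Y)) \<le> (1 - eps) * card Y \<longleftrightarrow> eps * card Y \<le> card (non_nbhd E x Y)"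
    for x
  proof -
    have "nbhd V E x \<inter> Y = {m \<in> Y. E x m}"
      using graphD(3)[OF assms(1)] by (auto simp: nbhd_def)
    then have "real (card (nbhd V E x \<inter> Y)) + card (non_nbhd E x Y) = card Y"
      using card_filter_add_card_non_nbhd[OF assms(2)] by (metis of_nat_add)
    then show ?thesis
      unfolding left_diff_distrib mult_1_left by linarith
  qed
  then show ?thesis
    unfolding S_set_def by blast
qed

lemma has_induced_biclawI:
  assumes g: "graph V E" and xy: "E x y"
    and Xs: "Xs \<subseteq> nbhd V E y - nbhd V E x" "card Xs = a" "x \<notin> Xs"
    and Ys: "Ys \<subseteq> nbhd V E x - nbhd V E y" "card Ys = b" "y \<notin> Ys"
    and indep: "\<forall>u\<in>Xs \<union> Ys. \<forall>v\<in>Xs \<union> Ys. \<not> E u v"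
  shows "has_induced_biclaw V E a b"
proof -
  note sym = graphD(4)[OF g]
  have fin: "finite Xs" "finite Ys"
    using Xs(1) Ys(1) finite_nbhd[OF g] finite_subset by blast+
  have in_V: "x \<in> V" "y \<in> V" "Xs \<subseteq> V" "Ys \<subseteq> V"
    using xy Xs(1) Ys(1) graphD(2,3)[OF g] by (auto simp: nbhd_def)
  have adj: "\<And>p. p \<in> Xs \<Longrightarrow> E y p \<and> E p y \<and> \<not> E x p \<and> \<not> E p x"
    "\<And>q. q \<in> Ys \<Longrightarrow> E x q \<and> E q x \<and> \<not> E y q \<and> \<not> E q y"
    using Xs(1) Ys(1) in_V sym by (auto simp: nbhd_def)
  have apart: "x \<noteq> y" "x \<notin> Ys" "y \<notin> Xs" "\<And>p. p \<in> Xs \<Longrightarrow> p \<notin> Ys"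
    using xy adj graphD(5)[OF g] by blast+
  define I J where "I = {1..a}" and "J = {1..b}"
  obtain h1 where h1: "bij_betw h1 I Xs"
    using ex_bij_betw_nat_finite_1[OF fin(1)] Xs(2) unfolding I_def by blast
  obtain h2 where h2: "bij_betw h2 J Ys"
    using ex_bij_betw_nat_finite_1[OF fin(2)] Ys(2) unfolding J_def by blast
  have h_mem: "\<And>i. i \<in> I \<Longrightarrow> h1 i \<in> Xs" "\<And>j. j \<in> J \<Longrightarrow> h2 j \<in> Ys"
    using h1 h2 bij_betwE by blast+
  have h_inj: "\<And>i j. i \<in> I \<Longrightarrow> j \<in> I \<Longrightarrow> h1 i = h1 j \<longleftrightarrow> i = j"
    "\<And>i j. i \<in> J \<Longrightarrow> j \<in> J \<Longrightarrow> h2 i = h2 j \<longleftrightarrow> i = j"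
    using h1 h2 unfolding bij_betw_def inj_on_def by blast+
  have h_ne: "\<And>i. i \<in> I \<Longrightarrow> h1 i \<noteq> x \<and> x \<noteq> h1 i \<and> h1 i \<noteq> y \<and> y \<noteq> h1 i"
    "\<And>j. j \<in> J \<Longrightarrow> h2 j \<noteq> x \<and> x \<noteq> h2 j \<and> h2 j \<noteq> y \<and> y \<noteq> h2 j"
    "\<And>i j. i \<in> I \<Longrightarrow> j \<in> J \<Longrightarrow> h1 i \<noteq> h2 j \<and> h2 j \<noteq> h1 i"
    using h_mem apart Xs(3) Ys(3) by metis+
  define f where "f v = (case v of BX \<Rightarrow> x | BY \<Rightarrow> y | BXi i \<Rightarrow> h1 i | BYi j \<Rightarrow> h2 j)" for v
  have verts: "BX \<in> biclaw_verts a b" "BY \<in> biclaw_verts a b"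
    "BXi i \<in> biclaw_verts a b \<longleftrightarrow> i \<in> I" "BYi j \<in> biclaw_verts a b \<longleftrightarrow> j \<in> J" for i j
    by (auto simp: biclaw_verts_def I_def J_def)
  have "inj_on f (biclaw_verts a b)"
  proof (rule inj_onI)
    fix u v assume "u \<in> biclaw_verts a b" "v \<in> biclaw_verts a b" "f u = f v"
    then show "u = v"
      by (cases u; cases v) (auto simp: f_def verts h_inj h_ne apart(1) apart(1)[symmetric])
  qed
  moreover have "f ` biclaw_verts a b \<subseteq> V"
  proof
    fix w assume "w \<in> f ` biclaw_verts a b"
    then obtain v where "v \<in> biclaw_verts a b" "w = f v" by blast
    then show "w \<in> V"
      using in_V h_mem by (cases v) (auto simp: f_def verts)
  qed
  moreover have "E (f u) (f v) \<longleftrightarrow> biclaw_edge u v"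
    if "u \<in> biclaw_verts a b" "v \<in> biclaw_verts a b" for u v
    using that xy adj indep h_mem graphD(5)[OF g]
    by (cases u; cases v) (auto simp: f_def verts sym)
  ultimately show ?thesis
    unfolding has_induced_biclaw_def by blast
qed

locale biclaw_free_bipartite_graph =
  fixes V :: "nat set" and E :: "nat \<Rightarrow> nat \<Rightarrow> bool" and t :: nat
  assumes graph: "graph V E" and bipartite: "bipartite V E"
    and biclaw_free: "\<not> has_induced_biclaw V E t t" and t_pos: "0 < t"
begin

lemma nbhds_not_anticomplete:
  assumes xy: "E x y" and Xs: "Xs \<subseteq> nbhd V E y" "card Xs = t"
    and Ys: "Ys \<subseteq> nbhd V E x" "card Ys = t"
  shows "\<exists>u\<in>Xs. \<exists>v\<in>Ys. E u v"
proof (rule ccontr)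
  assume anti: "\<not> ?thesis"
  note indep = nbhd_independent[OF graph bipartite] and sym = graphD(4)[OF graph]
  have "x \<in> nbhd V E y" "y \<in> nbhd V E x"
    using xy sym graphD(2,3)[OF graph] by (auto simp: nbhd_def)
  have Xs_indep: "\<not> E u v" if "u \<in> insert x Xs" "v \<in> Xs" for u v
    by (rule indep[of u y v]) (use that Xs(1) \<open>x \<in> nbhd V E y\<close> in auto)
  have Ys_indep: "\<not> E u v" if "u \<in> insert y Ys" "v \<in> Ys" for u v
    by (rule indep[of u x v]) (use that Ys(1) \<open>y \<in> nbhd V E x\<close> in auto)
  have "Xs \<subseteq> nbhd V E y - nbhd V E x"
    using Xs(1) Xs_indep[OF insertI1] unfolding nbhd_def by blast
  moreover have "Ys \<subseteq> nbhd V E x - nbhd V E y"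
    using Ys(1) Ys_indep[OF insertI1] unfolding nbhd_def by blast
  moreover have "\<not> E u v" if "u \<in> Xs \<union> Ys" "v \<in> Xs \<union> Ys" for u v
    using that Xs_indep Ys_indep anti sym[of u v] by blast
  moreover obtain p q where "p \<in> Xs" "q \<in> Ys"
    using Xs(2) Ys(2) t_pos by (metis all_not_in_conv card.empty less_irrefl)
  then have "x \<notin> Xs" "y \<notin> Ys"
    using anti Xs(1) Ys(1) sym[of y p] unfolding nbhd_def by blast+
  ultimately have "has_induced_biclaw V E t t"
    using has_induced_biclawI[OF graph xy _ Xs(2) _ _ Ys(2)] by blast
  with biclaw_free show False ..
qed

lemma card_S_set_nbhds_lt:
  fixes \<delta> :: real
  assumes ab: "E a b" and \<delta>: "0 < \<delta>" "\<delta> \<le> 1" and deg: "2 * real t \<le> \<delta> * card (nbhd V E b)"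
  shows "card (S_set V E (nbhd V E a) (nbhd V E b) \<delta>) < real t * (2 / \<delta>) ^ t"
proof (rule ccontr)
  let ?X = "S_set V E (nbhd V E a) (nbhd V E b) \<delta>"
  assume "\<not> ?thesis"
  then have large: "real t * (2 / \<delta>) ^ t \<le> card ?X"
    by simp
  have misses: "\<forall>u\<in>?X. \<delta> * card (nbhd V E b) \<le> card (non_nbhd E u (nbhd V E b))"
    by (simp add: S_set_eq_non_nbhd[OF graph finite_nbhd[OF graph]])
  have "finite ?X"
    using finite_nbhd[OF graph] by (simp add: S_set_def)
  then obtain Ts Tm where "Ts \<subseteq> ?X" "Tm \<subseteq> nbhd V E b" "card Ts = t" "card Tm = t"
    and anti: "\<forall>u\<in>Ts. \<forall>m\<in>Tm. \<not> E u m"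
    using exists_anticomplete_subsets[OF _ finite_nbhd[OF graph] \<delta> misses deg large] by blast
  moreover have "Ts \<subseteq> nbhd V E a"
    using \<open>Ts \<subseteq> ?X\<close> by (auto simp: S_set_def)
  ultimately show False
    using nbhds_not_anticomplete[OF graphD(4)[OF graph ab]] anti by blast
qed

lemma card_S_set_diff_lt:
  fixes \<delta> eps :: real
  assumes A: "finite A" and Z: "finite Z" "finite Z'"
    and eps: "eps \<le> 1" and \<delta>: "(real t + 1) * \<delta> \<le> eps / 2"
    and deg: "8 * real t \<le> eps * card Z'"
    and y_Z: "card (non_nbhd E y Z) < \<delta> * card Z"
    and y_Z': "card (non_nbhd E y Z') < \<delta> * card Z'"
  shows "card (S_set V E A Z' eps - S_set V E A Z \<delta>) < real t * (4 / eps) ^ t"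
proof (rule ccontr)
  define X where "X = S_set V E A Z' eps - S_set V E A Z \<delta>"
  assume "\<not> ?thesis"
  then have X_large: "real t * (4 / eps) ^ t \<le> card X"
    by (simp add: X_def)
  have "0 < \<delta> * card Z"
    using y_Z by (metis of_nat_0_le_iff order_le_less_trans)
  then have "0 < \<delta>"
    by (simp add: zero_less_mult_iff)
  then have "0 \<le> real t * \<delta>"
    by simp
  then have \<delta>_le: "\<delta> \<le> eps / 2"
    using \<delta> unfolding distrib_right mult_1_left by linarith
  have "finite X"
    using A by (simp add: X_def S_set_def)
  have misses: "\<forall>u\<in>X. eps * card Z' \<le> card (non_nbhd E u Z')"
    by (auto simp: X_def S_set_eq_non_nbhd[OF graph Z(2)])
  obtain Ts Tm where Ts: "Ts \<subseteq> X" "card Ts = t" and Tm: "Tm \<subseteq> {m \<in> Z'. E y m}"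
    "card Tm = t" and anti: "\<forall>u\<in>Ts. \<forall>m\<in>Tm. \<not> E u m"
    using exists_anticomplete_subsets_in_nbhd[OF \<open>finite X\<close> Z(2) eps \<delta>_le y_Z' misses deg X_large]
    by blast
  have close: "\<forall>u\<in>insert y Ts. card (non_nbhd E u Z) < \<delta> * card Z"
    using Ts(1) y_Z
    by (auto simp: X_def S_set_eq_non_nbhd[OF graph Z(1)] S_set_eq_non_nbhd[OF graph Z(2)])
  have "finite Ts"
    using Ts(1) \<open>finite X\<close> finite_subset by blast
  then have "card (insert y Ts) \<le> t + 1"
    using Ts(2) by (simp add: card_insert_if)
  then have "card (insert y Ts) * \<delta> \<le> (real t + 1) * \<delta>"
    using \<open>0 < \<delta>\<close> by (intro mult_right_mono) auto
  then have "card (insert y Ts) * \<delta> \<le> 1"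
    using \<delta> eps by linarith
  then obtain w where "w \<in> Z" and w: "\<forall>u\<in>insert y Ts. E u w"
    using exists_common_neighbour[OF finite_insert[THEN iffD2, OF \<open>finite Ts\<close>] insert_not_empty Z(1) close]
    by blast
  have "Ts \<subseteq> nbhd V E w" "Tm \<subseteq> nbhd V E y"
    using w Tm(1) graphD[OF graph] by (auto simp: nbhd_def)
  then show False
    using nbhds_not_anticomplete[OF w[rule_format, OF insertI1]] Ts(2) Tm(2) anti by blast
qed

end

(* With this \<delta>, any t + 1 vertices that each miss fewer than \<delta> |N(x2)| vertices of N(x2) have a
   common neighbour in N(x2). *)
definition path_delta :: "nat \<Rightarrow> real \<Rightarrow> real" where
  "path_delta t eps = eps / (2 * (real t + 1))"

definition C3 :: "nat \<Rightarrow> real \<Rightarrow> real" where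
  "C3 t eps = 2 * (real t * (2 / path_delta t eps) ^ t) + real t * (4 / eps) ^ t + 8 * real t / eps
     + 2 * real t / path_delta t eps + 1"

lemma path_delta_bounds:
  assumes "0 < eps" "eps < 1"
  shows "0 < path_delta t eps" "path_delta t eps \<le> 1" "(real t + 1) * path_delta t eps = eps / 2"
proof -
  have "real t + 1 \<noteq> 0" "2 * real t + 2 \<noteq> 0"
    using of_nat_0_le_iff[of t] by linarith+
  then show sum: "(real t + 1) * path_delta t eps = eps / 2"
    unfolding path_delta_def by (simp add: field_simps)
  show "0 < path_delta t eps"
    using assms(1) by (simp add: path_delta_def)
  then have "0 \<le> real t * path_delta t eps"
    by simp
  then show "path_delta t eps \<le> 1"
    using sum assms unfolding distrib_right mult_1_left by linarith
qed

lemma C3_ge: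
  assumes "0 < eps" "eps < 1"
  shows "2 * (real t * (2 / path_delta t eps) ^ t) < C3 t eps"
    and "real t * (2 / path_delta t eps) ^ t + real t * (4 / eps) ^ t \<le> C3 t eps"
    and "8 * real t / eps \<le> C3 t eps" and "2 * real t / path_delta t eps \<le> C3 t eps"
proof -
  have "0 < path_delta t eps"
    using path_delta_bounds[OF assms] by simp
  then have "0 \<le> real t * (2 / path_delta t eps) ^ t" "0 \<le> real t * (4 / eps) ^ t"
    "0 \<le> 8 * real t / eps" "0 \<le> 2 * real t / path_delta t eps"
    using assms(1) by simp_all
  then show "2 * (real t * (2 / path_delta t eps) ^ t) < C3 t eps"
    and "real t * (2 / path_delta t eps) ^ t + real t * (4 / eps) ^ t \<le> C3 t eps"
    and "8 * real t / eps \<le> C3 t eps" and "2 * real t / path_delta t eps \<le> C3 t eps"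
    unfolding C3_def by linarith+
qed

context biclaw_free_bipartite_graph
begin

lemma exists_nbhd_vertex_missing_few:
  fixes \<delta> :: real
  assumes ab: "E a b" and ac: "E a c" and \<delta>: "0 < \<delta>" "\<delta> \<le> 1"
    and deg: "2 * real t \<le> \<delta> * card (nbhd V E b)" "2 * real t \<le> \<delta> * card (nbhd V E c)"
    and deg_a: "2 * (real t * (2 / \<delta>) ^ t) < card (nbhd V E a)"
  shows "\<exists>y\<in>nbhd V E a. card (non_nbhd E y (nbhd V E b)) < \<delta> * card (nbhd V E b)
    \<and> card (non_nbhd E y (nbhd V E c)) < \<delta> * card (nbhd V E c)"
proof -
  define Bb Bc where "Bb = S_set V E (nbhd V E a) (nbhd V E b) \<delta>"
    and "Bc = S_set V E (nbhd V E a) (nbhd V E c) \<delta>"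
  have "card (nbhd V E a) \<le> card (Bb \<union> Bc)" if "nbhd V E a \<subseteq> Bb \<union> Bc"
    using that finite_nbhd[OF graph] by (intro card_mono) (auto simp: Bb_def Bc_def S_set_def)
  also have "\<dots> \<le> card Bb + card Bc"
    by (rule card_Un_le)
  finally have "\<not> nbhd V E a \<subseteq> Bb \<union> Bc"
    using card_S_set_nbhds_lt[OF ab \<delta> deg(1)] card_S_set_nbhds_lt[OF ac \<delta> deg(2)] deg_a
    unfolding Bb_def Bc_def by linarith
  then obtain y where "y \<in> nbhd V E a" "y \<notin> Bb" "y \<notin> Bc"
    by blast
  then show ?thesis
    unfolding Bb_def Bc_def S_set_eq_non_nbhd[OF graph finite_nbhd[OF graph]]
    by (intro bexI[of _ y]) (auto simp: not_le)
qed

lemma card_S_set_path_le: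
  assumes x12: "E x1 x2" and x23: "E x2 x3" and x34: "E x3 x4"
    and eps: "0 < eps" "eps < 1" and deg: "min_degree_ge V E (C3 t eps)"
  shows "card (S_set V E (nbhd V E x1) (nbhd V E x4) eps) \<le> C3 t eps"
proof -
  define \<delta> where "\<delta> = path_delta t eps"
  note C3_bounds = C3_ge[OF eps, of t, folded \<delta>_def]
  have "0 < \<delta>" "\<delta> \<le> 1" and \<delta>_sum: "(real t + 1) * \<delta> = eps / 2"
    using path_delta_bounds[OF eps, of t] by (simp_all add: \<delta>_def)
  have N_large: "C3 t eps \<le> card (nbhd V E v)" if "v \<in> V" for v
    using deg that by (simp add: min_degree_ge_def)
  have \<delta>_deg: "2 * real t \<le> \<delta> * card (nbhd V E v)" if "v \<in> V" for v
  proof -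
    have "2 * real t / \<delta> \<le> card (nbhd V E v)"
      using C3_bounds(4) N_large[OF that] by linarith
    then show ?thesis
      using \<open>0 < \<delta>\<close> by (simp add: divide_le_eq mult.commute)
  qed
  have in_V: "x2 \<in> V" "x3 \<in> V" "x4 \<in> V"
    using x12 x34 graphD(2,3)[OF graph] by blast+
  obtain y where y_close: "card (non_nbhd E y (nbhd V E x2)) < \<delta> * card (nbhd V E x2)"
    "card (non_nbhd E y (nbhd V E x4)) < \<delta> * card (nbhd V E x4)"
    using exists_nbhd_vertex_missing_few[OF graphD(4)[OF graph x23] x34 \<open>0 < \<delta>\<close> \<open>\<delta> \<le> 1\<close>
        \<delta>_deg[OF in_V(1)] \<delta>_deg[OF in_V(3)]] C3_bounds(1) N_large[OF in_V(2)]
    by fastforce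
  let ?S = "S_set V E (nbhd V E x1) (nbhd V E x4) eps"
  define B where "B = S_set V E (nbhd V E x1) (nbhd V E x2) \<delta>"
  have "8 * real t / eps \<le> card (nbhd V E x4)"
    using C3_bounds(3) N_large[OF in_V(3)] by linarith
  then have "8 * real t \<le> eps * card (nbhd V E x4)"
    using eps(1) by (simp add: divide_le_eq mult.commute)
  then have "card (?S - B) < real t * (4 / eps) ^ t"
    unfolding B_def using eps \<delta>_sum y_close finite_nbhd[OF graph]
    by (intro card_S_set_diff_lt) simp_all
  moreover have "card B < real t * (2 / \<delta>) ^ t"
    unfolding B_def by (rule card_S_set_nbhds_lt[OF x12 \<open>0 < \<delta>\<close> \<open>\<delta> \<le> 1\<close> \<delta>_deg[OF in_V(1)]])
  moreover have "card ?S \<le> card (?S - B) + card B"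
    using diff_card_le_card_Diff[of B ?S] finite_nbhd[OF graph] by (simp add: B_def S_set_def)
  ultimately show ?thesis
    using C3_bounds(2) by linarith
qed

end

theorem mainTheorem6:
  "\<exists>C3 :: nat \<Rightarrow> real \<Rightarrow> real. \<forall>t :: nat. \<forall>eps :: real. \<forall>V E.
     t > 0 \<longrightarrow> 0 < eps \<longrightarrow> eps < 1 \<longrightarrow>
     graph V E \<longrightarrow> bipartite V E \<longrightarrow> min_degree_ge V E (C3 t eps) \<longrightarrow>
     \<not> has_induced_biclaw V E t t \<longrightarrow>
     (\<forall>x1 x2 x3 x4. distinct [x1, x2, x3, x4] \<and> E x1 x2 \<and> E x2 x3 \<and> E x3 x4 \<longrightarrow>
        real (card (S_set V E (nbhd V E x1) (nbhd V E x4) eps)) \<le> C3 t eps)"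
proof (intro exI[of _ C3] allI impI)
  fix t :: nat and eps :: real and V E x1 x2 x3 x4
  assume "t > 0" "0 < eps" "eps < 1" "graph V E" "bipartite V E"
    and deg: "min_degree_ge V E (C3 t eps)" and "\<not> has_induced_biclaw V E t t"
    and path: "distinct [x1, x2, x3, x4] \<and> E x1 x2 \<and> E x2 x3 \<and> E x3 x4"
  interpret biclaw_free_bipartite_graph V E t
    by unfold_locales fact+
  from path have "E x1 x2" "E x2 x3" "E x3 x4"
    by simp_all
  then show "real (card (S_set V E (nbhd V E x1) (nbhd V E x4) eps)) \<le> C3 t eps"
    using \<open>0 < eps\<close> \<open>eps < 1\<close> deg by (rule card_S_set_path_le)
qed

end
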